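(* Let $a,b,c,y$ be real numbers with $c<b$, $0<b$, $y>0$ and $b<y^2<a$. Then \[ \int_{\sqrt{b}}^{y}\frac{\mathrm{d}u}{u\sqrt{(a-u^2)(u^2-b)(u^2-c)}} =\frac{1}{b}\sqrt{\frac{y^2-b}{(a-b)(b-c)}}\;\mathrm{F}_{D}^{(3)}\left(\tfrac12;1,\tfrac12,\tfrac12;\tfrac32;\ -\frac{y^2-b}{b},\,\frac{y^2-b}{a-b},\,-\frac{y^2-b}{b-c}\right). \]
   Context: For $n\ge1$, the Lauricella hypergeometric function of $n$ variables is \[ \mathrm{F}_{D}^{(n)}(a;b_1,\dots,b_n;c;x_1,\dots,x_n)=\sum_{m_1,\dots,m_n\ge0}\frac{(a)_{m_1+\cdots+m_n}(b_1)_{m_1}\cdots(b_n)_{m_n}}{(c)_{m_1+\cdots+m_n}\,m_1!\cdots m_n!}\,x_1^{m_1}\cdots x_n^{m_n},\qquad |x_i|<1, \] where $(\lambda)_m=\Gamma(\lambda+m)/\Gamma(\lambda)$ is the Pochhammer symbol; for $\operatorname{Re}c>\operatorname{Re}a>0$ it equals $\frac{\Gamma(c)}{\Gamma(a)\Gamma(c-a)}\int_0^1 u^{a-1}(1-u)^{c-a-1}\prod_{i=1}^n(1-x_iu)^{-b_i}\,\mathrm{d}u$, which gives its analytic continuation to $x_i\notin[1,\infty)$. *)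

theory Defs
  imports "HOL-Analysis.Analysis"
begin

text \<open>Lauricella function F_D^(n) with parameters aa, bs i (i < n), cc and real
  arguments xs i (i < n), given by its Euler integral representation
  (valid for c > a > 0 and real arguments x_i < 1); this is the analytic
  continuation of the defining power series used in the paper.\<close>
definition lauricella_FD ::
  "nat \<Rightarrow> real \<Rightarrow> (nat \<Rightarrow> real) \<Rightarrow> real \<Rightarrow> (nat \<Rightarrow> real) \<Rightarrow> real" where
  "lauricella_FD n aa bs cc xs =
     Gamma cc / (Gamma aa * Gamma (cc - aa)) *
     integral {0..1} (\<lambda>u. u powr (aa - 1) * (1 - u) powr (cc - aa - 1) *
        (\<Prod>i<n. (1 - xs i * u) powr (- bs i)))"

end

theory Submission
  imports Defs
begin

text \<open>Both sides reduce to the integral over [0,1] of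
  1 / ((b + d s^2) sqrt (a - b - d s^2) sqrt (b - c + d s^2)), where d = y^2 - b.
  On the left substitute u = sqrt (b + d s^2); in the Euler integral of F_D with
  parameters 1/2 and 3/2 substitute t = s^2, which removes the singularity t^(-1/2).\<close>

lemma strict_mono_on_image_atLeastAtMost:
  fixes g :: "real \<Rightarrow> real"
  assumes "p \<le> q" "strict_mono_on {p..q} g" "continuous_on {p..q} g"
  shows "g ` {p..q} = {g p..g q}"
proof
  show "g ` {p..q} \<subseteq> {g p..g q}"
    using assms(1,2) by (auto intro!: strict_mono_on_leD[OF assms(2)])
  show "{g p..g q} \<subseteq> g ` {p..q}"
    using IVT'[of g p _ q] assms(1,3) by fastforce
qed

lemma has_integral_substitution_strict_mono:
  fixes f g g' h :: "real \<Rightarrow> real"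
  assumes "p \<le> q" and mono: "strict_mono_on {p..q} g"
    and g': "\<And>s. s \<in> {p..q} \<Longrightarrow> (g has_field_derivative g' s) (at s within {p..q})"
    and h: "continuous_on {p..q} h" and "finite K"
    and fgh: "\<And>s. s \<in> {p..q} - K \<Longrightarrow> \<bar>g' s\<bar> * f (g s) = h s"
  shows "(f has_integral integral {p..q} h) {g p..g q}"
proof -
  have "h absolutely_integrable_on {p..q}"
    using h by (rule absolutely_integrable_continuous_real)
  then have "(\<lambda>s. \<bar>g' s\<bar> * f (g s)) absolutely_integrable_on {p..q}"
    by (rule absolutely_integrable_spike[of _ _ K]) (use \<open>finite K\<close> fgh in auto)
  moreover have "integral {p..q} (\<lambda>s. \<bar>g' s\<bar> * f (g s)) = integral {p..q} h"
    by (rule integral_spike[of K]) (use \<open>finite K\<close> fgh in auto)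
  ultimately have "f absolutely_integrable_on g ` {p..q} \<and> integral (g ` {p..q}) f = integral {p..q} h"
    using has_absolute_integral_change_of_variables_1'[where f = f and b = "integral {p..q} h",
        OF _ g' strict_mono_on_imp_inj_on[OF mono]]
    by simp
  moreover have "g ` {p..q} = {g p..g q}"
    using assms(1) mono DERIV_continuous_on[OF g'] by (rule strict_mono_on_image_atLeastAtMost)
  ultimately have "f integrable_on {g p..g q}" "integral {g p..g q} f = integral {p..q} h"
    by (simp_all add: absolutely_integrable_on_def)
  then show ?thesis
    using integrable_integral by fastforce
qed

lemma lauricella_FD_half_three_halves:
  "lauricella_FD n (1/2) bs (3/2) xs =
     1/2 * integral {0..1} (\<lambda>t. t powr (-1/2) * (\<Prod>i<n. (1 - xs i * t) powr (- bs i)))"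
proof -
  have "Gamma (3/2::real) = 1/2 * Gamma (1/2)"
    using Gamma_plus1[of "1/2::real"] nonpos_Ints_nonpos by force
  moreover have "Gamma (1/2::real) > 0"
    by (rule Gamma_real_pos) simp
  ultimately have gamma_quotient: "Gamma (3/2) / (Gamma (1/2) * Gamma (3/2 - 1/2)) = (1/2::real)"
    by (simp add: less_imp_neq[symmetric])
  have euler_integral: "integral {0..1} (\<lambda>t. t powr (1/2 - 1) * (1 - t) powr (3/2 - 1/2 - 1) *
        (\<Prod>i<n. (1 - xs i * t) powr (- bs i))) =
      integral {0..1} (\<lambda>t. t powr (-1/2) * (\<Prod>i<n. (1 - xs i * t) powr (- bs i)))"
    \<comment> \<open>the factor (1 - t) powr 0 is 1 except at t = 1, where 0 powr 0 = 0\<close>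
    by (rule integral_spike[of "{1}"]) auto
  show ?thesis
    unfolding lauricella_FD_def gamma_quotient euler_integral ..
qed

lemma lauricella_FD_3_half_three_halves:
  "lauricella_FD 3 (1/2) (\<lambda>i. [b0, b1, b2] ! i) (3/2) (\<lambda>i. [x0, x1, x2] ! i) =
     1/2 * integral {0..1} (\<lambda>t. t powr (-1/2) *
       ((1 - x0 * t) powr (- b0) * (1 - x1 * t) powr (- b1) * (1 - x2 * t) powr (- b2)))"
proof -
  have "(\<Prod>i<3. F i) = F 0 * F 1 * F 2" for F :: "nat \<Rightarrow> real"
    by (simp add: numeral_3_eq_3 numeral_2_eq_2 lessThan_Suc mult_ac)
  then show ?thesis
    unfolding lauricella_FD_half_three_halves by (simp add: numeral_2_eq_2)
qed

lemma mult_power2_le_of_unit_interval: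
  fixes d s :: real
  assumes "0 \<le> d" "s \<in> {0..1}"
  shows "d * s\<^sup>2 \<le> d"
  using assms mult_left_le[of "s\<^sup>2" d] by (simp add: power_le_one)

definition reduced_elliptic_integrand :: "real \<Rightarrow> real \<Rightarrow> real \<Rightarrow> real \<Rightarrow> real \<Rightarrow> real" where
  "reduced_elliptic_integrand b d A B s =
     1 / ((b + d * s\<^sup>2) * sqrt (A - d * s\<^sup>2) * sqrt (B + d * s\<^sup>2))"

lemma continuous_on_reduced_elliptic_integrand:
  assumes "0 < b" "0 \<le> d" "d < A" "0 < B"
  shows "continuous_on {0..1} (reduced_elliptic_integrand b d A B)"
proof -
  have "d * s\<^sup>2 < A" if "s \<in> {0..1}" for s
    using mult_power2_le_of_unit_interval[OF assms(2) that] assms(3) by linarith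
  moreover have "0 < b + d * s\<^sup>2" "0 < B + d * s\<^sup>2" for s
    using assms by (simp_all add: add_pos_nonneg)
  ultimately have "(b + d * s\<^sup>2) * sqrt (A - d * s\<^sup>2) * sqrt (B + d * s\<^sup>2) \<noteq> 0"
    if "s \<in> {0..1}" for s
    using that by (metis diff_gt_0_iff_gt mult_eq_0_iff real_sqrt_gt_zero less_irrefl)
  then show ?thesis
    unfolding reduced_elliptic_integrand_def by (intro continuous_intros) auto
qed

lemma elliptic_integrand_sqrt_substitution:
  fixes a b c d s u :: real
  assumes "0 < d" "0 < s" "0 < b + d * s\<^sup>2" "0 < a - b - d * s\<^sup>2" "0 < b - c + d * s\<^sup>2"
    and "u = sqrt (b + d * s\<^sup>2)"
  shows "\<bar>d * s / u\<bar> * (1 / (u * sqrt ((a - u\<^sup>2) * (u\<^sup>2 - b) * (u\<^sup>2 - c)))) =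
         sqrt d * reduced_elliptic_integrand b d (a - b) (b - c) s"
proof -
  have u: "u > 0" "u\<^sup>2 = b + d * s\<^sup>2"
    using assms by simp_all
  have "sqrt ((a - u\<^sup>2) * (u\<^sup>2 - b) * (u\<^sup>2 - c)) =
      sqrt (a - b - d * s\<^sup>2) * sqrt (d * s\<^sup>2) * sqrt (b - c + d * s\<^sup>2)"
    unfolding u(2) by (simp only: real_sqrt_mult) (simp add: algebra_simps real_sqrt_mult)
  also have "sqrt (d * s\<^sup>2) = sqrt d * s"
    using assms(2) by (simp add: real_sqrt_mult)
  finally have sqrt_prod: "sqrt ((a - u\<^sup>2) * (u\<^sup>2 - b) * (u\<^sup>2 - c)) =
      sqrt (a - b - d * s\<^sup>2) * (sqrt d * s) * sqrt (b - c + d * s\<^sup>2)" .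
  have "\<bar>d * s / u\<bar> = (sqrt d * s) * sqrt d / u"
    using assms(1,2) u(1) by simp
  then have "\<bar>d * s / u\<bar> * (1 / (u * sqrt ((a - u\<^sup>2) * (u\<^sup>2 - b) * (u\<^sup>2 - c)))) =
      sqrt d / (u\<^sup>2 * sqrt (a - b - d * s\<^sup>2) * sqrt (b - c + d * s\<^sup>2))"
    unfolding sqrt_prod using assms(1,2,4,5) u(1) by (simp add: power2_eq_square field_simps)
  then show ?thesis
    unfolding reduced_elliptic_integrand_def u(2) by simp
qed

lemma has_integral_elliptic_integrand_reduced:
  fixes a b c d :: real
  assumes "c < b" "0 < b" "0 < d" "d < a - b"
  shows "((\<lambda>u. 1 / (u * sqrt ((a - u\<^sup>2) * (u\<^sup>2 - b) * (u\<^sup>2 - c)))) has_integral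
           sqrt d * integral {0..1} (reduced_elliptic_integrand b d (a - b) (b - c)))
         {sqrt b..sqrt (b + d)}"
proof -
  have pos: "0 < b + d * s\<^sup>2" for s
    using assms(2,3) by (simp add: add_pos_nonneg)
  have cont: "continuous_on {0..1} (reduced_elliptic_integrand b d (a - b) (b - c))"
    using assms by (intro continuous_on_reduced_elliptic_integrand) auto
  have "((\<lambda>u. 1 / (u * sqrt ((a - u\<^sup>2) * (u\<^sup>2 - b) * (u\<^sup>2 - c)))) has_integral
      integral {0..1} (\<lambda>s. sqrt d * reduced_elliptic_integrand b d (a - b) (b - c) s))
      {sqrt (b + d * 0\<^sup>2)..sqrt (b + d * 1\<^sup>2)}"
  proof (rule has_integral_substitution_strict_mono[where K = "{0}"])
    show "strict_mono_on {0..1} (\<lambda>s. sqrt (b + d * s\<^sup>2))"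
      using assms(3) by (auto simp: strict_mono_on_def intro!: power_strict_mono)
    show "((\<lambda>s. sqrt (b + d * s\<^sup>2)) has_field_derivative d * s / sqrt (b + d * s\<^sup>2))
        (at s within {0..1})" for s
      using pos[of s] by (auto intro!: derivative_eq_intros simp: field_simps)
    show "\<bar>d * s / sqrt (b + d * s\<^sup>2)\<bar> * (1 / (sqrt (b + d * s\<^sup>2) *
        sqrt ((a - (sqrt (b + d * s\<^sup>2))\<^sup>2) * ((sqrt (b + d * s\<^sup>2))\<^sup>2 - b) *
          ((sqrt (b + d * s\<^sup>2))\<^sup>2 - c)))) =
        sqrt d * reduced_elliptic_integrand b d (a - b) (b - c) s"
      if "s \<in> {0..1} - {0}" for s
    proof (rule elliptic_integrand_sqrt_substitution[OF assms(3) _ pos _ _ refl])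
      show "0 < s"
        using that by auto
      have "d * s\<^sup>2 \<le> d"
        using that assms(3) by (intro mult_power2_le_of_unit_interval) auto
      then show "0 < a - b - d * s\<^sup>2"
        using assms(4) by linarith
      show "0 < b - c + d * s\<^sup>2"
        using assms(1,3) by (intro add_pos_nonneg) simp_all
    qed
  qed (auto intro: continuous_on_mult_left cont)
  then show ?thesis
    by (simp only: integral_mult_right zero_power2 one_power2 mult_zero_right mult_1_right add_0_right)
qed

lemma euler_integrand_square_substitution:
  fixes b d s A B :: real
  assumes "0 < b" "0 < A" "0 < B" "0 \<le> d" "0 < s" "d * s\<^sup>2 < A"
  shows "\<bar>2 * s\<bar> * ((s\<^sup>2) powr (-1/2) * ((1 - - d / b * s\<^sup>2) powr (- 1) *
            (1 - d / A * s\<^sup>2) powr (- (1/2)) * (1 - - d / B * s\<^sup>2) powr (- (1/2)))) =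
         2 * b * sqrt A * sqrt B * reduced_elliptic_integrand b d A B s"
proof -
  have pos: "0 < b + d * s\<^sup>2" "0 < A - d * s\<^sup>2" "0 < B + d * s\<^sup>2"
    using assms by (simp_all add: add_pos_nonneg)
  have powr_neg_half: "x powr (- (1/2)) = 1 / sqrt x" if "x > 0" for x :: real
    using that by (simp add: powr_minus_divide powr_half_sqrt)
  have "(s\<^sup>2) powr (-1/2) = 1 / s"
    using assms(5) powr_neg_half[of "s\<^sup>2"] by simp
  moreover have "(1 - - d / b * s\<^sup>2) powr (- 1) = b / (b + d * s\<^sup>2)"
  proof -
    have "1 - - d / b * s\<^sup>2 = (b + d * s\<^sup>2) / b"
      using assms(1) by (simp add: field_simps)
    then show ?thesis
      using assms(1) pos(1) by (simp add: powr_minus_divide)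
  qed
  moreover have "(1 - d / A * s\<^sup>2) powr (- (1/2)) = sqrt A / sqrt (A - d * s\<^sup>2)"
  proof -
    have "1 - d / A * s\<^sup>2 = (A - d * s\<^sup>2) / A"
      using assms(2) by (simp add: field_simps)
    then show ?thesis
      using assms(2) pos(2) powr_neg_half[of "(A - d * s\<^sup>2) / A"] by (simp add: real_sqrt_divide)
  qed
  moreover have "(1 - - d / B * s\<^sup>2) powr (- (1/2)) = sqrt B / sqrt (B + d * s\<^sup>2)"
  proof -
    have "1 - - d / B * s\<^sup>2 = (B + d * s\<^sup>2) / B"
      using assms(3) by (simp add: field_simps)
    then show ?thesis
      using assms(3) pos(3) powr_neg_half[of "(B + d * s\<^sup>2) / B"] by (simp add: real_sqrt_divide)
  qed
  ultimately show ?thesis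
    unfolding reduced_elliptic_integrand_def using assms(5) pos by simp
qed

lemma lauricella_FD_reduced_elliptic_integral:
  fixes b d A B :: real
  assumes "0 < b" "0 < A" "0 < B" "0 \<le> d" "d < A"
  shows "lauricella_FD 3 (1/2) (\<lambda>i. [1, 1/2, 1/2] ! i) (3/2) (\<lambda>i. [- d / b, d / A, - d / B] ! i) =
         b * sqrt A * sqrt B * integral {0..1} (reduced_elliptic_integrand b d A B)"
proof -
  have cont: "continuous_on {0..1} (reduced_elliptic_integrand b d A B)"
    using assms by (intro continuous_on_reduced_elliptic_integrand) auto
  define P where "P t = t powr (-1/2) * ((1 - - d / b * t) powr (- 1) *
      (1 - d / A * t) powr (- (1/2)) * (1 - - d / B * t) powr (- (1/2)))" for t
  have "(P has_integral integral {0..1} (\<lambda>s. 2 * b * sqrt A * sqrt B * reduced_elliptic_integrand b d A B s))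
      {0\<^sup>2..1\<^sup>2}"
  proof (rule has_integral_substitution_strict_mono[where K = "{0}"])
    show "strict_mono_on {0..1} (\<lambda>s::real. s\<^sup>2)"
      by (auto simp: strict_mono_on_def intro!: power_strict_mono)
    show "((\<lambda>s. s\<^sup>2) has_field_derivative 2 * s) (at s within {0..1})" for s :: real
      by (auto intro!: derivative_eq_intros)
    show "\<bar>2 * s\<bar> * P (s\<^sup>2) = 2 * b * sqrt A * sqrt B * reduced_elliptic_integrand b d A B s"
      if "s \<in> {0..1} - {0}" for s
      unfolding P_def
    proof (rule euler_integrand_square_substitution[OF assms(1-4)])
      show "0 < s"
        using that by auto
      have "d * s\<^sup>2 \<le> d"
        using that assms(4) by (intro mult_power2_le_of_unit_interval) auto
      then show "d * s\<^sup>2 < A"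
        using assms(5) by linarith
    qed
  qed (auto intro: continuous_on_mult_left cont)
  then have "integral {0..1} P = 2 * b * sqrt A * sqrt B * integral {0..1} (reduced_elliptic_integrand b d A B)"
    by (simp add: integral_unique)
  then show ?thesis
    unfolding lauricella_FD_3_half_three_halves P_def[symmetric] by simp
qed

theorem mainTheorem4:
  fixes a b c y :: real
  assumes "c < b" and "0 < b" and "y > 0" and "b < y\<^sup>2" and "y\<^sup>2 < a"
  shows "((\<lambda>u. 1 / (u * sqrt ((a - u\<^sup>2) * (u\<^sup>2 - b) * (u\<^sup>2 - c)))) has_integral
           (1 / b * sqrt ((y\<^sup>2 - b) / ((a - b) * (b - c))) *
            lauricella_FD 3 (1/2) (\<lambda>i. [1, 1/2, 1/2] ! i) (3/2)
              (\<lambda>i. [- (y\<^sup>2 - b) / b, (y\<^sup>2 - b) / (a - b), - (y\<^sup>2 - b) / (b - c)] ! i)))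
         {sqrt b..y}"
proof -
  define d where "d = y\<^sup>2 - b"
  have d: "0 < d" "d < a - b" and y: "sqrt (b + d) = y"
    using assms by (simp_all add: d_def)
  have "0 < a - b" "0 < b - c"
    using assms d by simp_all
  then have "lauricella_FD 3 (1/2) (\<lambda>i. [1, 1/2, 1/2] ! i) (3/2)
      (\<lambda>i. [- d / b, d / (a - b), - d / (b - c)] ! i) =
      b * sqrt (a - b) * sqrt (b - c) * integral {0..1} (reduced_elliptic_integrand b d (a - b) (b - c))"
    using assms(2) d by (intro lauricella_FD_reduced_elliptic_integral) simp_all
  with \<open>0 < a - b\<close> \<open>0 < b - c\<close> have prefactor:
    "1 / b * sqrt (d / ((a - b) * (b - c))) * lauricella_FD 3 (1/2) (\<lambda>i. [1, 1/2, 1/2] ! i) (3/2)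
      (\<lambda>i. [- d / b, d / (a - b), - d / (b - c)] ! i) =
     sqrt d * integral {0..1} (reduced_elliptic_integrand b d (a - b) (b - c))"
    using assms(2) by (simp add: real_sqrt_divide real_sqrt_mult)
  from has_integral_elliptic_integrand_reduced[OF assms(1,2) d, unfolded y, folded prefactor]
  show ?thesis
    unfolding d_def .
qed

end
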